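(* There exists a constant $T^*>0$ such that every arc $\mathcal Z$ of a billiard trajectory in $D$ with winding number $k\in\mathbb{Z}\setminus\{0\}$ and endpoints $\mathcal Z(t_0)=(x_0,-L)$, $\mathcal Z(t_1)=(x_1,-L)\in\ell'$ has travel time $|t_1-t_0|\le T^*$; that is, the travel time is bounded uniformly in $x_0$, $x_1$ and $k$.
   Context: Fix $L,h,\beta>0$; $V_\beta(z)=-\frac1{|z|}-\frac{\beta}{|z|^2}$; $\ell=\{y=-L\}$, $\mathcal P=\{y>-L\}$. Winding number of an arc $u$ from $\ell$ to $\ell$ in $\mathcal P\setminus\{0\}$ in between: winding number around $0$ of $u$ concatenated with the oriented segment from its final to its initial point. $\hat{\mathcal Z}$ is a fixed solution of $\ddot z=-\nabla V_\beta(z)$ at energy $h$ ($\frac12|\dot z|^2+V_\beta(z)=h$) meeting $\ell$ at times $\tau_0<\tau_1$, in $\mathcal P$ on $(\tau_0,\tau_1)$, of winding number $1$, with the angle between $\dot{\hat{\mathcal Z}}(\tau_0)$ and $(1,0)$ less than $\pi/2$ and that between $(-1,0)$ and $\dot{\hat{\mathcal Z}}(\tau_1)$ greater than $\pi/2$; $\ell'$ is the segment of $\ell$ between $\hat{\mathcal Z}(\tau_0),\hat{\mathcal Z}(\tau_1)$ and $D$ the compact region bounded by $\hat{\mathcal Z}([\tau_0,\tau_1])$ and $\ell'$. An arc of a billiard trajectory is a collision-free solution of the equations of motion at energy $h$ between two consecutive hits of $\ell$. *)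

theory Defs
  imports "HOL-Complex_Analysis.Complex_Analysis"
begin

text \<open>The plane is identified with the complex numbers: the point (x,y) is x + i y.\<close>

definition Vb :: "real \<Rightarrow> complex \<Rightarrow> real" where
  "Vb \<beta> z = - 1 / norm z - \<beta> / (norm z)\<^sup>2"

text \<open>Collision-free solution of z'' = - grad V_beta(z) at energy h on the interval [a,b].
  The gradient is expressed via the Frechet derivative: dV(z) v = inner (grad V z) v.\<close>
definition is_solution :: "real \<Rightarrow> real \<Rightarrow> (real \<Rightarrow> complex) \<Rightarrow> real \<Rightarrow> real \<Rightarrow> bool" where
  "is_solution \<beta> h z a b \<longleftrightarrow> a < b \<and> (\<forall>t\<in>{a..b}. z t \<noteq> 0) \<and>
     (\<exists>z' z''. \<forall>t\<in>{a..b}.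
        (z has_vector_derivative z' t) (at t within {a..b}) \<and>
        (z' has_vector_derivative z'' t) (at t within {a..b}) \<and>
        (Vb \<beta> has_derivative (\<lambda>v. inner (- z'' t) v)) (at (z t)) \<and>
        (1/2) * (norm (z' t))\<^sup>2 + Vb \<beta> (z t) = h)"

definition billiard_arc :: "real \<Rightarrow> real \<Rightarrow> real \<Rightarrow> (real \<Rightarrow> complex) \<Rightarrow> real \<Rightarrow> real \<Rightarrow> bool" where
  "billiard_arc \<beta> h L z t0 t1 \<longleftrightarrow> is_solution \<beta> h z t0 t1 \<and>
     Im (z t0) = - L \<and> Im (z t1) = - L \<and> (\<forall>t\<in>{t0<..<t1}. Im (z t) > - L)"

definition arc_path :: "(real \<Rightarrow> complex) \<Rightarrow> real \<Rightarrow> real \<Rightarrow> real \<Rightarrow> complex" where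
  "arc_path z t0 t1 = (\<lambda>s. z (t0 + s * (t1 - t0)))"

definition closed_arc :: "(real \<Rightarrow> complex) \<Rightarrow> real \<Rightarrow> real \<Rightarrow> real \<Rightarrow> complex" where
  "closed_arc z t0 t1 = arc_path z t0 t1 +++ linepath (z t1) (z t0)"

definition arc_winding :: "(real \<Rightarrow> complex) \<Rightarrow> real \<Rightarrow> real \<Rightarrow> complex" where
  "arc_winding z t0 t1 = winding_number (closed_arc z t0 t1) 0"

definition vang :: "complex \<Rightarrow> complex \<Rightarrow> real" where
  "vang u v = arccos (inner u v / (norm u * norm v))"

end

theory Submission
  imports Defs
begin

text \<open>The bound comes from the Lagrange--Jacobi identity. Along a solution at energy \<open>h\<close>,
  the virial \<open>\<nabla>V\<^sub>\<beta>(z) \<bullet> z = 1/|z| + 2\<beta>/|z|\<^sup>2\<close> cancels the \<open>\<beta>\<close>-terms of the energy, so that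
  \<open>I = |z|\<^sup>2\<close> satisfies \<open>I'' = 4h + 2/|z| \<ge> 4h\<close>. Hence \<open>I(t) - 2ht\<^sup>2\<close> is convex, and comparing its
  midpoint value with its endpoint values gives \<open>h (t\<^sub>1 - t\<^sub>0)\<^sup>2 \<le> |z(t\<^sub>0)|\<^sup>2 + |z(t\<^sub>1)|\<^sup>2\<close>.
  Points of \<open>\<ell>'\<close> are bounded in norm by its endpoints, so the travel time is bounded
  without using the winding number, the region \<open>D\<close> or the angle conditions.\<close>

lemma Vb_gradient_inner_self:
  fixes w :: complex
  assumes "w \<noteq> 0" and grad: "(Vb \<beta> has_derivative (\<lambda>v. inner g v)) (at w)"
  shows "inner g w = 1 / norm w + 2 * \<beta> / (norm w)\<^sup>2"
proof -
  define r where "r = norm w"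
  have "r > 0" using \<open>w \<noteq> 0\<close> by (simp add: r_def)
  define V where "V = (\<lambda>x::real. - 1 / x - \<beta> / x\<^sup>2)"
  define V' where "V' = 1 / r\<^sup>2 + 2 * \<beta> / r ^ 3"
  have "(V has_real_derivative V') (at r)"
    unfolding V_def V'_def using \<open>r > 0\<close>
    by (auto intro!: derivative_eq_intros simp: power2_eq_square power3_eq_cube field_simps)
  then have "((\<lambda>x. V (norm x)) has_derivative (\<lambda>v. V' * inner v (sgn w))) (at w)"
    using has_derivative_compose[OF has_derivative_norm[OF \<open>w \<noteq> 0\<close>]]
    by (simp add: has_field_derivative_def r_def)
  moreover have "(\<lambda>x. V (norm x)) = Vb \<beta>" by (simp add: V_def Vb_def fun_eq_iff)
  ultimately have "(\<lambda>v. inner g v) = (\<lambda>v. V' * inner v (sgn w))"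
    using grad has_derivative_unique by metis
  then have "inner g w = V' * inner w (sgn w)" by metis
  also have "inner w (sgn w) = r"
    using \<open>w \<noteq> 0\<close> by (simp add: sgn_div_norm r_def power2_norm_eq_inner[symmetric] power2_eq_square)
  finally show ?thesis
    using \<open>r > 0\<close> by (simp add: V'_def r_def field_simps power2_eq_square power3_eq_cube)
qed

lemma lagrange_jacobi:
  assumes "is_solution \<beta> h z a b"
  obtains I' where
    "\<And>t. t \<in> {a..b} \<Longrightarrow> ((\<lambda>t. (norm (z t))\<^sup>2) has_real_derivative I' t) (at t within {a..b})"
    "\<And>t. t \<in> {a..b} \<Longrightarrow> (I' has_real_derivative 4 * h + 2 / norm (z t)) (at t within {a..b})"
proof -
  from assms obtain z' z'' where nonzero: "\<And>t. t \<in> {a..b} \<Longrightarrow> z t \<noteq> 0" and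
    sol: "\<And>t. t \<in> {a..b} \<Longrightarrow> (z has_vector_derivative z' t) (at t within {a..b}) \<and>
        (z' has_vector_derivative z'' t) (at t within {a..b}) \<and>
        (Vb \<beta> has_derivative (\<lambda>v. inner (- z'' t) v)) (at (z t)) \<and>
        (1/2) * (norm (z' t))\<^sup>2 + Vb \<beta> (z t) = h"
    unfolding is_solution_def by blast
  define I' where "I' t = 2 * inner (z t) (z' t)" for t
  show thesis
  proof
    fix t assume t: "t \<in> {a..b}"
    have z: "(z has_derivative (\<lambda>s. s *\<^sub>R z' t)) (at t within {a..b})"
     and z': "(z' has_derivative (\<lambda>s. s *\<^sub>R z'' t)) (at t within {a..b})"
      using sol[OF t] by (simp_all add: has_vector_derivative_def)
    have "((\<lambda>t. inner (z t) (z t)) has_real_derivative I' t) (at t within {a..b})"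
      unfolding I'_def has_field_derivative_def
      by (rule derivative_eq_intros z | simp)+ (simp add: fun_eq_iff inner_commute algebra_simps)
    then show "((\<lambda>t. (norm (z t))\<^sup>2) has_real_derivative I' t) (at t within {a..b})"
      by (simp add: power2_norm_eq_inner)
    define r where "r = norm (z t)"
    have "r > 0" using nonzero[OF t] by (simp add: r_def)
    have virial: "inner (z t) (z'' t) = - (1 / r + 2 * \<beta> / r\<^sup>2)"
      using Vb_gradient_inner_self[of "z t" \<beta> "- z'' t"] sol[OF t] nonzero[OF t]
      by (simp add: r_def inner_commute)
    have energy: "inner (z' t) (z' t) = 2 * h + 2 / r + 2 * \<beta> / r\<^sup>2"
      using sol[OF t] by (auto simp: Vb_def r_def power2_norm_eq_inner[symmetric] algebra_simps)
    have "(I' has_real_derivative 2 * (inner (z' t) (z' t) + inner (z t) (z'' t))) (at t within {a..b})"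
      unfolding I'_def has_field_derivative_def
      by (rule derivative_eq_intros z z' | simp)+ (simp add: fun_eq_iff inner_commute algebra_simps)
    then show "(I' has_real_derivative 4 * h + 2 / norm (z t)) (at t within {a..b})"
      unfolding virial energy by (simp add: r_def algebra_simps)
  qed
qed

lemma midpoint_convex_of_second_derivative_nonneg:
  fixes p :: "real \<Rightarrow> real"
  assumes "a \<le> b"
    and p': "\<And>t. t \<in> {a..b} \<Longrightarrow> (p has_real_derivative p' t) (at t within {a..b})"
    and p'': "\<And>t. t \<in> {a..b} \<Longrightarrow> (p' has_real_derivative p'' t) (at t within {a..b})"
    and nonneg: "\<And>t. t \<in> {a..b} \<Longrightarrow> p'' t \<ge> 0"
  shows "2 * p ((a + b) / 2) \<le> p a + p b"
proof -
  have mvt: "\<exists>s\<in>{x..y}. f y - f x = f' s * (y - x)"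
    if "a \<le> x" "x \<le> y" "y \<le> b"
      and "\<And>t. t \<in> {a..b} \<Longrightarrow> (f has_real_derivative f' t) (at t within {a..b})" for f f' x y
  proof (rule mvt_very_simple[OF \<open>x \<le> y\<close>])
    fix t assume "x \<le> t" "t \<le> y"
    with that have "(f has_real_derivative f' t) (at t within {x..y})"
      by (intro has_field_derivative_subset[OF that(4)[of t]]) auto
    then show "(f has_derivative (\<lambda>h. f' t * h)) (at t within {x..y})"
      by (simp add: has_field_derivative_def)
  qed
  have p'_mono: "p' x \<le> p' y" if xy: "a \<le> x" "x \<le> y" "y \<le> b" for x y
  proof -
    obtain s where "s \<in> {x..y}" "p' y - p' x = p'' s * (y - x)"
      using mvt[OF xy p''] by blast
    moreover have "p'' s \<ge> 0" using nonneg \<open>s \<in> {x..y}\<close> xy by auto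
    ultimately show ?thesis using xy by (metis diff_ge_0_iff_ge mult_nonneg_nonneg)
  qed
  define m where "m = (a + b) / 2"
  have "a \<le> m" "m \<le> b" using \<open>a \<le> b\<close> by (auto simp: m_def)
  obtain s1 where s1: "s1 \<in> {a..m}" "p m - p a = p' s1 * (m - a)"
    using mvt[OF order_refl \<open>a \<le> m\<close> \<open>m \<le> b\<close> p'] by blast
  obtain s2 where s2: "s2 \<in> {m..b}" "p b - p m = p' s2 * (b - m)"
    using mvt[OF \<open>a \<le> m\<close> \<open>m \<le> b\<close> order_refl p'] by blast
  have "p' s1 * (m - a) \<le> p' s2 * (m - a)"
    using p'_mono[of s1 s2] s1 s2 \<open>a \<le> m\<close> by (intro mult_right_mono) auto
  moreover have "b - m = m - a" by (simp add: m_def field_simps)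
  ultimately have "p m - p a \<le> p b - p m" using s1 s2 by simp
  then show ?thesis by (simp add: m_def)
qed

lemma is_solution_duration_bound:
  assumes "is_solution \<beta> h z a b" and "norm (z a) \<le> M" "norm (z b) \<le> M"
  shows "h * (b - a)\<^sup>2 \<le> 2 * M\<^sup>2"
proof -
  obtain I' where
    I': "\<And>t. t \<in> {a..b} \<Longrightarrow> ((\<lambda>t. (norm (z t))\<^sup>2) has_real_derivative I' t) (at t within {a..b})" and
    I'': "\<And>t. t \<in> {a..b} \<Longrightarrow> (I' has_real_derivative 4 * h + 2 / norm (z t)) (at t within {a..b})"
    using lagrange_jacobi[OF assms(1)] by blast
  define p where "p t = (norm (z t))\<^sup>2 - 2 * h * t\<^sup>2" for t
  have "a \<le> b" using assms(1) by (simp add: is_solution_def)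
  have "2 * p ((a + b) / 2) \<le> p a + p b"
  proof (rule midpoint_convex_of_second_derivative_nonneg[OF \<open>a \<le> b\<close>])
    fix t assume t: "t \<in> {a..b}"
    show "(p has_real_derivative I' t - 4 * h * t) (at t within {a..b})"
      unfolding p_def by (rule derivative_eq_intros I'[OF t] | simp)+
    show "((\<lambda>t. I' t - 4 * h * t) has_real_derivative 2 / norm (z t)) (at t within {a..b})"
      by (rule derivative_eq_intros I''[OF t] | simp)+
  qed simp
  moreover have "p a + p b - 2 * p ((a + b) / 2) =
      (norm (z a))\<^sup>2 + (norm (z b))\<^sup>2 - 2 * (norm (z ((a + b) / 2)))\<^sup>2 - h * (b - a)\<^sup>2"
    unfolding p_def by (simp add: power2_eq_square field_simps)
  moreover have "(norm (z a))\<^sup>2 \<le> M\<^sup>2" "(norm (z b))\<^sup>2 \<le> M\<^sup>2"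
    using assms(2,3) by (auto intro: power_mono)
  ultimately show ?thesis using zero_le_power2[of "norm (z ((a + b) / 2))"] by linarith
qed

theorem proposition3p6:
  fixes L h \<beta> \<tau>0 \<tau>1 :: real and Zh :: "real \<Rightarrow> complex"
  assumes "L > 0" and "h > 0" and "\<beta> > 0"
    and Zh_arc: "billiard_arc \<beta> h L Zh \<tau>0 \<tau>1"
    and Zh_wind: "arc_winding Zh \<tau>0 \<tau>1 = 1"
    and Zh_ang0: "vang (vector_derivative Zh (at \<tau>0 within {\<tau>0..\<tau>1})) 1 < pi / 2"
    and Zh_ang1: "vang (-1) (vector_derivative Zh (at \<tau>1 within {\<tau>0..\<tau>1})) > pi / 2"
  defines "l' \<equiv> closed_segment (Zh \<tau>0) (Zh \<tau>1)"
    and "D \<equiv> path_image (closed_arc Zh \<tau>0 \<tau>1) \<union> inside (path_image (closed_arc Zh \<tau>0 \<tau>1))"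
  shows "\<exists>T>0. \<forall>z t0 t1.
           billiard_arc \<beta> h L z t0 t1 \<and> (\<forall>t\<in>{t0..t1}. z t \<in> D) \<and>
           (\<exists>k::int. k \<noteq> 0 \<and> arc_winding z t0 t1 = of_int k) \<and>
           z t0 \<in> l' \<and> z t1 \<in> l'
           \<longrightarrow> \<bar>t1 - t0\<bar> \<le> T"
proof -
  define M where "M = max (norm (Zh \<tau>0)) (norm (Zh \<tau>1))"
  have l'_bounded: "l' \<subseteq> cball 0 M"
    unfolding l'_def M_def by (rule closed_segment_subset) auto
  have "\<bar>t1 - t0\<bar> \<le> sqrt (2 * M\<^sup>2 / h) + 1"
    if "billiard_arc \<beta> h L z t0 t1" "z t0 \<in> l'" "z t1 \<in> l'" for z t0 t1
  proof -
    have "is_solution \<beta> h z t0 t1" using that(1) by (simp add: billiard_arc_def)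
    moreover have "norm (z t0) \<le> M" "norm (z t1) \<le> M" using that(2,3) l'_bounded by auto
    ultimately have "h * (t1 - t0)\<^sup>2 \<le> 2 * M\<^sup>2" by (rule is_solution_duration_bound)
    then have "(t1 - t0)\<^sup>2 \<le> 2 * M\<^sup>2 / h"
      using \<open>h > 0\<close> by (simp add: field_simps mult.commute)
    then show ?thesis using real_sqrt_le_mono by fastforce
  qed
  moreover have "sqrt (2 * M\<^sup>2 / h) + 1 > 0"
    using \<open>h > 0\<close> by (simp add: add_nonneg_pos)
  ultimately show ?thesis by blast
qed

end
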